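(* (i) $\simeq$ and $\simeq_\omega$ are congruences on monitors, i.e. equivalence relations preserved by $a.\_$ (for every $a\in\mathit{Act}$) and by $+$. (ii) $\simeq\ \subseteq\ \simeq_\omega$, and the inclusion is strict when $\mathit{Act}$ is finite. (iii) If $\mathit{Act}$ is infinite then $\simeq\ =\ \simeq_\omega$.
   Context: Let $\mathit{Act}$ be a nonempty set of actions, $\tau\notin\mathit{Act}$, and $\mathit{Var}$ a countably infinite set of variables disjoint from $\mathit{Act}\cup\{\tau\}$. Monitors are the terms $m,n ::= v \mid a.m \mid m+n \mid x$ ($a\in\mathit{Act}$, $x\in\mathit{Var}$), with verdicts $v ::= \mathit{end}\mid\mathit{yes}\mid\mathit{no}$; a monitor is closed if it contains no variable; a (closed) substitution maps variables to (closed) monitors, and $\sigma(m)$ denotes its application. Transitions $\xrightarrow{\alpha}$ ($\alpha\in\mathit{Act}\cup\{\tau\}$) are the least relation with $a.m\xrightarrow{a}m$; $m\xrightarrow{\alpha}m'$ implies $m+n\xrightarrow{\alpha}m'$ and $n+m\xrightarrow{\alpha}m'$; and $v\xrightarrow{\alpha}v$ for every verdict $v$. Weak transitions: $m\xRightarrow{\varepsilon}m'$ iff $m(\xrightarrow{\tau})^*m'$; $m\xRightarrow{a}m'$ iff $m\xRightarrow{\varepsilon}\xrightarrow{a}\xRightarrow{\varepsilon}m'$; $m\xRightarrow{as'}m'$ ($s'\ne\varepsilon$) iff $m\xRightarrow{a}m_1\xRightarrow{s'}m'$ for some $m_1$. For closed $m$: $L_a(m)=\{s\in\mathit{Act}^*\mid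 m\xRightarrow{s}\mathit{yes}\}$, $L_r(m)=\{s\in\mathit{Act}^*\mid m\xRightarrow{s}\mathit{no}\}$. For closed $m,n$: $m\simeq n$ (verdict equivalence) iff $L_a(m)=L_a(n)$ and $L_r(m)=L_r(n)$; $m\simeq_\omega n$ ($\omega$-verdict equivalence) iff $L_a(m)\cdot\mathit{Act}^\omega=L_a(n)\cdot\mathit{Act}^\omega$ and $L_r(m)\cdot\mathit{Act}^\omega=L_r(n)\cdot\mathit{Act}^\omega$, where $\mathit{Act}^\omega$ is the set of infinite sequences over $\mathit{Act}$ and $\cdot$ is concatenation. For open monitors, $m\simeq n$ (resp. $m\simeq_\omega n$) iff $\sigma(m)\simeq\sigma(n)$ (resp. $\sigma(m)\simeq_\omega\sigma(n)$) for every closed substitution $\sigma$. *)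

theory Defs
  imports Main
begin

text \<open>Verdicts and monitors. Actions are a type 'a; the countably infinite
set of variables is rendered as nat. The silent action tau is None.\<close>

datatype verdict = End | Yes | No

datatype 'a mon = Verd verdict | Pre 'a "'a mon" | Sum "'a mon" "'a mon" | Var nat

primrec closed :: "'a mon \<Rightarrow> bool" where
  "closed (Verd v) = True"
| "closed (Pre a m) = closed m"
| "closed (Sum m n) = (closed m \<and> closed n)"
| "closed (Var x) = False"

primrec subst :: "(nat \<Rightarrow> 'a mon) \<Rightarrow> 'a mon \<Rightarrow> 'a mon" where
  "subst \<sigma> (Verd v) = Verd v"
| "subst \<sigma> (Pre a m) = Pre a (subst \<sigma> m)"
| "subst \<sigma> (Sum m n) = Sum (subst \<sigma> m) (subst \<sigma> n)"
| "subst \<sigma> (Var x) = \<sigma> x"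

definition closed_subst :: "(nat \<Rightarrow> 'a mon) \<Rightarrow> bool" where
  "closed_subst \<sigma> \<longleftrightarrow> (\<forall>x. closed (\<sigma> x))"

inductive step :: "'a mon \<Rightarrow> 'a option \<Rightarrow> 'a mon \<Rightarrow> bool" where
  pre: "step (Pre a m) (Some a) m"
| sumL: "step m \<alpha> m' \<Longrightarrow> step (Sum m n) \<alpha> m'"
| sumR: "step m \<alpha> m' \<Longrightarrow> step (Sum n m) \<alpha> m'"
| verd: "step (Verd v) \<alpha> (Verd v)"

definition tau_star :: "'a mon \<Rightarrow> 'a mon \<Rightarrow> bool" where
  "tau_star = (\<lambda>m m'. step m None m')\<^sup>*\<^sup>*"

definition weak_act :: "'a mon \<Rightarrow> 'a \<Rightarrow> 'a mon \<Rightarrow> bool" where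
  "weak_act m a m' \<longleftrightarrow>
     (\<exists>m1 m2. tau_star m m1 \<and> step m1 (Some a) m2 \<and> tau_star m2 m')"

fun weak_tr :: "'a mon \<Rightarrow> 'a list \<Rightarrow> 'a mon \<Rightarrow> bool" where
  "weak_tr m [] m' = tau_star m m'"
| "weak_tr m [a] m' = weak_act m a m'"
| "weak_tr m (a # b # s) m' = (\<exists>m1. weak_act m a m1 \<and> weak_tr m1 (b # s) m')"

definition La :: "'a mon \<Rightarrow> 'a list set" where
  "La m = {s. weak_tr m s (Verd Yes)}"

definition Lr :: "'a mon \<Rightarrow> 'a list set" where
  "Lr m = {s. weak_tr m s (Verd No)}"

text \<open>L \<cdot> Act^omega, infinite sequences as functions nat \<Rightarrow> 'a.\<close>
definition omega_ext :: "'a list set \<Rightarrow> (nat \<Rightarrow> 'a) set" where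
  "omega_ext L = {w. \<exists>s\<in>L. \<forall>i<length s. w i = s ! i}"

definition verdict_eq_closed :: "'a mon \<Rightarrow> 'a mon \<Rightarrow> bool" where
  "verdict_eq_closed m n \<longleftrightarrow> La m = La n \<and> Lr m = Lr n"

definition omega_eq_closed :: "'a mon \<Rightarrow> 'a mon \<Rightarrow> bool" where
  "omega_eq_closed m n \<longleftrightarrow>
     omega_ext (La m) = omega_ext (La n) \<and> omega_ext (Lr m) = omega_ext (Lr n)"

text \<open>Equivalences on all (possibly open) monitors via closed substitutions;
for closed monitors this coincides with the closed definitions since subst
acts as identity on them.\<close>
definition veq :: "'a mon \<Rightarrow> 'a mon \<Rightarrow> bool" where
  "veq m n \<longleftrightarrow> (\<forall>\<sigma>. closed_subst \<sigma> \<longrightarrow> verdict_eq_closed (subst \<sigma> m) (subst \<sigma> n))"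

definition veq_omega :: "'a mon \<Rightarrow> 'a mon \<Rightarrow> bool" where
  "veq_omega m n \<longleftrightarrow> (\<forall>\<sigma>. closed_subst \<sigma> \<longrightarrow> omega_eq_closed (subst \<sigma> m) (subst \<sigma> n))"

definition congruence :: "('a mon \<Rightarrow> 'a mon \<Rightarrow> bool) \<Rightarrow> bool" where
  "congruence R \<longleftrightarrow> equivp R
     \<and> (\<forall>a m n. R m n \<longrightarrow> R (Pre a m) (Pre a n))
     \<and> (\<forall>m m' n n'. R m m' \<and> R n n' \<longrightarrow> R (Sum m n) (Sum m' n'))"

end

theory Submission
  imports Defs
begin

text \<open>Tau steps only ever lead to verdicts, so the verdict languages are compositional:
  \<open>L(a.m) = a \<cdot> L(m)\<close>, \<open>L(m + n) = L(m) \<union> L(n)\<close>, and the language of a verdict is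
  all or nothing. Both equivalences are therefore congruences, and they are ordered because
  \<open>L \<cdot> Act\<^sup>\<omega>\<close> depends only on \<open>L\<close>. Verdict languages are closed under extension. If \<open>Act\<close>
  is infinite, pad an accepted trace \<open>s\<close> with an action \<open>b\<close> not occurring in \<open>n\<close>: a prefix
  of \<open>s b\<^sup>\<omega>\<close> accepted by \<open>n\<close> either is a prefix of \<open>s\<close> or reads \<open>b\<close> only inside a verdict, so
  \<open>n\<close> accepts \<open>s\<close> as well. If \<open>Act\<close> is finite, \<open>\<Sum>\<^sub>a a.yes\<close> and \<open>yes\<close> accept the same
  infinite traces but differ on the empty trace.\<close>

inductive_simps step_Verd_iff: "step (Verd u) \<alpha> k"
inductive_simps step_Pre_iff: "step (Pre a m) \<alpha> k"
inductive_simps step_Sum_iff: "step (Sum m n) \<alpha> k"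

lemma step_None_imp_verdict: "step m None k \<Longrightarrow> \<exists>v. k = Verd v"
  by (induction m "None :: 'a option" k rule: step.induct) auto

lemma step_None_imp_step: "step m None k \<Longrightarrow> step m \<alpha> k"
  by (induction m "None :: 'a option" k rule: step.induct) (auto intro: step.intros)

lemma tau_star_iff: "tau_star m k \<longleftrightarrow> k = m \<or> step m None k"
proof
  assume "tau_star m k"
  then show "k = m \<or> step m None k"
    unfolding tau_star_def
  proof (induction rule: rtranclp_induct)
    case (step k k')
    from step.IH show ?case
    proof
      assume "step m None k"
      moreover from this obtain u where "k = Verd u" using step_None_imp_verdict by blast
      ultimately show ?case using step.hyps(2) by (simp add: step_Verd_iff)
    qed (use step.hyps(2) in simp)
  qed simp
qed (auto simp: tau_star_def)

lemma weak_act_iff: "weak_act m a k \<longleftrightarrow> (\<exists>m'. step m (Some a) m' \<and> tau_star m' k)"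
proof
  assume "weak_act m a k"
  then obtain m1 m2 where m1: "tau_star m m1" and m2: "step m1 (Some a) m2" "tau_star m2 k"
    by (auto simp: weak_act_def)
  from m1 consider "m1 = m" | "step m None m1" by (auto simp: tau_star_iff)
  then show "\<exists>m'. step m (Some a) m' \<and> tau_star m' k"
  proof cases
    case 2
    \<comment> \<open>a tau step only ever reaches a verdict, which then loops on every action\<close>
    with m2 have "m2 = m1" using step_None_imp_verdict by (fastforce simp: step_Verd_iff)
    with 2 m2 show ?thesis by (blast intro: step_None_imp_step)
  qed (use m2 in blast)
qed (auto simp: weak_act_def tau_star_def)

lemma tau_star_refl: "tau_star m m"
  by (simp add: tau_star_def)

lemma weak_tr_tau_star: "tau_star m m1 \<Longrightarrow> weak_tr m1 s k \<Longrightarrow> weak_tr m s k"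
  by (induction m1 s k rule: weak_tr.induct)
    (auto simp: weak_act_def tau_star_def intro: rtranclp_trans)

lemma weak_tr_Cons: "weak_tr m (a # s) k \<longleftrightarrow> (\<exists>m'. step m (Some a) m' \<and> weak_tr m' s k)"
proof (cases s)
  case Nil
  then show ?thesis by (simp add: weak_act_iff)
next
  case (Cons b s')
  then show ?thesis
    by (simp add: weak_act_iff) (meson tau_star_refl weak_tr_tau_star)
qed

definition verdict_lang :: "verdict \<Rightarrow> 'a mon \<Rightarrow> 'a list set" where
  "verdict_lang v m = {s. weak_tr m s (Verd v)}"

lemma La_eq_verdict_lang: "La m = verdict_lang Yes m"
  and Lr_eq_verdict_lang: "Lr m = verdict_lang No m"
  by (simp_all add: La_def Lr_def verdict_lang_def)

lemma Nil_in_verdict_lang_iff: "[] \<in> verdict_lang v m \<longleftrightarrow> step m None (Verd v)"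
  by (auto simp: verdict_lang_def tau_star_iff intro: step.verd)

lemma Cons_in_verdict_lang_iff:
  "a # s \<in> verdict_lang v m \<longleftrightarrow> (\<exists>m'. step m (Some a) m' \<and> s \<in> verdict_lang v m')"
  by (simp add: verdict_lang_def weak_tr_Cons)

lemma verdict_lang_Verd: "verdict_lang v (Verd u) = (if u = v then UNIV else {})"
proof -
  have "s \<in> verdict_lang v (Verd u) \<longleftrightarrow> u = v" for s :: "'a list"
    by (induction s) (auto simp: Nil_in_verdict_lang_iff Cons_in_verdict_lang_iff step_Verd_iff)
  then show ?thesis by auto
qed

lemma verdict_lang_Pre: "verdict_lang v (Pre a m) = Cons a ` verdict_lang v m"
proof -
  have "s \<in> verdict_lang v (Pre a m) \<longleftrightarrow> s \<in> Cons a ` verdict_lang v m" for s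
    by (cases s) (auto simp: Nil_in_verdict_lang_iff Cons_in_verdict_lang_iff step_Pre_iff)
  then show ?thesis by blast
qed

lemma verdict_lang_Sum: "verdict_lang v (Sum m n) = verdict_lang v m \<union> verdict_lang v n"
proof -
  have "s \<in> verdict_lang v (Sum m n) \<longleftrightarrow> s \<in> verdict_lang v m \<union> verdict_lang v n" for s
    by (cases s) (auto simp: Nil_in_verdict_lang_iff Cons_in_verdict_lang_iff step_Sum_iff)
  then show ?thesis by blast
qed

lemma verdict_lang_append: "s \<in> verdict_lang v m \<Longrightarrow> s @ t \<in> verdict_lang v m"
proof (induction s arbitrary: m)
  case Nil
  then show ?case
    by (cases t) (auto simp: Nil_in_verdict_lang_iff Cons_in_verdict_lang_iff verdict_lang_Verd
        intro: step_None_imp_step)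
qed (auto simp: Cons_in_verdict_lang_iff)

primrec acts :: "'a mon \<Rightarrow> 'a set" where
  "acts (Verd v) = {}"
| "acts (Pre a m) = insert a (acts m)"
| "acts (Sum m n) = acts m \<union> acts n"
| "acts (Var x) = {}"

lemma finite_acts: "finite (acts m)"
  by (induction m) auto

lemma acts_step_subset: "step m \<alpha> k \<Longrightarrow> acts k \<subseteq> acts m"
  by (induction rule: step.induct) auto

lemma step_fresh_imp_step_None: "step m (Some b) k \<Longrightarrow> b \<notin> acts m \<Longrightarrow> step m None k"
  by (induction m "Some b" k rule: step.induct) (auto intro: step.intros)

lemma verdict_lang_strip_fresh:
  assumes "set t \<inter> acts m = {}" and "s @ t \<in> verdict_lang v m"
  shows "s \<in> verdict_lang v m"
  using assms
proof (induction s arbitrary: m)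
  case Nil
  show ?case
  proof (cases t)
    case (Cons b t')
    \<comment> \<open>a fresh action can only be read by a verdict reached through tau steps\<close>
    with Nil obtain k where "step m (Some b) k" "t' \<in> verdict_lang v k" "b \<notin> acts m"
      by (auto simp: Cons_in_verdict_lang_iff)
    then have "step m None k" by (blast intro: step_fresh_imp_step_None)
    moreover from this obtain u where "k = Verd u" using step_None_imp_verdict by blast
    moreover from this have "u = v"
      using \<open>t' \<in> verdict_lang v k\<close> by (simp add: verdict_lang_Verd split: if_splits)
    ultimately show ?thesis by (simp add: Nil_in_verdict_lang_iff)
  qed (use Nil in simp)
next
  case (Cons a s)
  then show ?case
    using acts_step_subset by (fastforce simp: Cons_in_verdict_lang_iff)
qed

lemma omega_ext_Un: "omega_ext (A \<union> B) = omega_ext A \<union> omega_ext B"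
  by (auto simp: omega_ext_def)

lemma omega_ext_image_Cons:
  "omega_ext (Cons a ` A) = {w. w 0 = a \<and> (\<lambda>i. w (Suc i)) \<in> omega_ext A}"
proof -
  have "(\<forall>i<length (a # s). w i = (a # s) ! i) \<longleftrightarrow> w 0 = a \<and> (\<forall>i<length s. w (Suc i) = s ! i)"
    for w :: "nat \<Rightarrow> 'a" and s
    by (auto simp: less_Suc_eq_0_disj)
  then show ?thesis by (auto simp: omega_ext_def)
qed

lemma omega_ext_UNIV: "omega_ext UNIV = UNIV"
  by (auto simp: omega_ext_def intro: exI[of _ "[]"])

lemma subst_closed: "closed m \<Longrightarrow> subst \<sigma> m = m"
  by (induction m) auto

lemma closed_subst_Verd: "closed_subst (\<lambda>_. Verd v)"
  by (simp add: closed_subst_def)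

lemma veq_closed_iff: "closed m \<Longrightarrow> closed n \<Longrightarrow> veq m n \<longleftrightarrow> verdict_eq_closed m n"
  using closed_subst_Verd by (fastforce simp: veq_def subst_closed)

lemma veq_omega_closed_iff:
  "closed m \<Longrightarrow> closed n \<Longrightarrow> veq_omega m n \<longleftrightarrow> omega_eq_closed m n"
  using closed_subst_Verd by (fastforce simp: veq_omega_def subst_closed)

lemma congruence_veq: "congruence veq"
  unfolding congruence_def veq_def verdict_eq_closed_def La_eq_verdict_lang Lr_eq_verdict_lang
  by (auto simp: verdict_lang_Pre verdict_lang_Sum intro!: equivpI reflpI sympI transpI)

lemma congruence_veq_omega: "congruence veq_omega"
  unfolding congruence_def veq_omega_def omega_eq_closed_def La_eq_verdict_lang Lr_eq_verdict_lang
  by (auto simp: verdict_lang_Pre verdict_lang_Sum omega_ext_Un omega_ext_image_Cons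
      intro!: equivpI reflpI sympI transpI)

lemma veq_le_veq_omega: "veq \<le> veq_omega"
  by (auto simp: veq_def veq_omega_def verdict_eq_closed_def omega_eq_closed_def)

lemma verdict_lang_subset_if_omega_ext_subset:
  assumes "infinite (UNIV :: 'a set)"
    and "omega_ext (verdict_lang v m) \<subseteq> omega_ext (verdict_lang v (n :: 'a mon))"
  shows "verdict_lang v m \<subseteq> verdict_lang v n"
proof
  fix s
  assume s: "s \<in> verdict_lang v m"
  obtain b where b: "b \<notin> acts n"
    using ex_new_if_finite[OF assms(1) finite_acts] by blast
  define w where "w = (\<lambda>i. if i < length s then s ! i else b)"
  have "w \<in> omega_ext (verdict_lang v m)"
    using s by (auto simp: omega_ext_def w_def)
  with assms(2) have "w \<in> omega_ext (verdict_lang v n)" by blast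
  then obtain t where t: "t \<in> verdict_lang v n" "\<forall>i<length t. w i = t ! i"
    by (auto simp: omega_ext_def)
  show "s \<in> verdict_lang v n"
  proof (cases "length t \<le> length s")
    case True
    then have "t = take (length t) s"
      using t(2) by (intro nth_equalityI) (auto simp: w_def)
    then have "s = t @ drop (length t) s"
      by (metis append_take_drop_id)
    then show ?thesis using t(1) verdict_lang_append by metis
  next
    case False
    then have "t = s @ replicate (length t - length s) b"
      using t(2) by (intro nth_equalityI) (auto simp: w_def nth_append)
    moreover have "set (replicate (length t - length s) b) \<inter> acts n = {}"
      using b by auto
    ultimately show ?thesis
      using t(1) verdict_lang_strip_fresh by metis
  qed
qed

lemma veq_eq_veq_omega_if_infinite:
  assumes "infinite (UNIV :: 'a set)"
  shows "(veq :: 'a mon \<Rightarrow> 'a mon \<Rightarrow> bool) = veq_omega"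
proof (intro antisym veq_le_veq_omega le_funI le_boolI)
  fix m n :: "'a mon"
  have lang_eq: "verdict_lang v m' = verdict_lang v n'"
    if "omega_ext (verdict_lang v m') = omega_ext (verdict_lang v n')" for v and m' n' :: "'a mon"
    using that verdict_lang_subset_if_omega_ext_subset[OF assms] by (metis equalityI order_refl)
  assume "veq_omega m n"
  then show "veq m n"
    unfolding veq_def veq_omega_def verdict_eq_closed_def omega_eq_closed_def
      La_eq_verdict_lang Lr_eq_verdict_lang
    using lang_eq by blast
qed

definition sum_pre_yes :: "'a list \<Rightarrow> 'a mon" where
  "sum_pre_yes xs = foldr (\<lambda>a m. Sum (Pre a (Verd Yes)) m) xs (Verd End)"

lemma closed_sum_pre_yes: "closed (sum_pre_yes xs)"
  by (induction xs) (auto simp: sum_pre_yes_def)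

lemma verdict_lang_Yes_sum_pre_yes:
  "verdict_lang Yes (sum_pre_yes xs) = {s. s \<noteq> [] \<and> hd s \<in> set xs}"
  by (induction xs) (auto simp: sum_pre_yes_def verdict_lang_Sum verdict_lang_Pre verdict_lang_Verd
      neq_Nil_conv)

lemma verdict_lang_No_sum_pre_yes: "verdict_lang No (sum_pre_yes xs) = {}"
  by (induction xs) (auto simp: sum_pre_yes_def verdict_lang_Sum verdict_lang_Pre verdict_lang_Verd)

lemma not_veq_sum_pre_yes_Yes: "\<not> veq (sum_pre_yes xs) (Verd Yes)"
  by (auto simp: veq_closed_iff closed_sum_pre_yes verdict_eq_closed_def La_eq_verdict_lang
      verdict_lang_Yes_sum_pre_yes verdict_lang_Verd)

lemma veq_omega_sum_pre_yes_Yes: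
  assumes "set xs = UNIV"
  shows "veq_omega (sum_pre_yes xs) (Verd Yes)"
proof -
  have "omega_ext (verdict_lang Yes (sum_pre_yes xs)) = UNIV"
  proof -
    have "w \<in> omega_ext (verdict_lang Yes (sum_pre_yes xs))" for w :: "nat \<Rightarrow> 'a"
      using assms by (auto simp: omega_ext_def verdict_lang_Yes_sum_pre_yes intro!: exI[of _ "[w 0]"])
    then show ?thesis by blast
  qed
  then show ?thesis
    by (simp add: veq_omega_closed_iff closed_sum_pre_yes omega_eq_closed_def La_eq_verdict_lang
        Lr_eq_verdict_lang verdict_lang_No_sum_pre_yes verdict_lang_Verd omega_ext_UNIV)
qed

lemma veq_less_veq_omega_if_finite:
  assumes "finite (UNIV :: 'a set)"
  shows "(veq :: 'a mon \<Rightarrow> 'a mon \<Rightarrow> bool) < veq_omega"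
proof -
  obtain xs :: "'a list" where "set xs = UNIV"
    using finite_list[OF assms] by blast
  then have "\<not> veq_omega \<le> (veq :: 'a mon \<Rightarrow> 'a mon \<Rightarrow> bool)"
    using veq_omega_sum_pre_yes_Yes not_veq_sum_pre_yes_Yes by (metis le_boolD le_funD)
  then show ?thesis
    using veq_le_veq_omega by (simp add: less_le_not_le)
qed

theorem mainTheorem2:
  shows "(congruence (veq :: 'a mon \<Rightarrow> 'a mon \<Rightarrow> bool)
          \<and> congruence (veq_omega :: 'a mon \<Rightarrow> 'a mon \<Rightarrow> bool))
       \<and> ((veq :: 'a mon \<Rightarrow> 'a mon \<Rightarrow> bool) \<le> veq_omega
          \<and> (finite (UNIV :: 'a set) \<longrightarrow> (veq :: 'a mon \<Rightarrow> 'a mon \<Rightarrow> bool) < veq_omega))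
       \<and> (infinite (UNIV :: 'a set) \<longrightarrow> (veq :: 'a mon \<Rightarrow> 'a mon \<Rightarrow> bool) = veq_omega)"
  using congruence_veq congruence_veq_omega veq_le_veq_omega veq_less_veq_omega_if_finite
    veq_eq_veq_omega_if_infinite
  by blast

end
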